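(* For every $\theta\in\Theta$, the optimality gap satisfies $\Delta(\theta)\le\sqrt{2\log v(\theta)}$, where $v(\theta)=\sup_{\theta'\in\Theta}d_2(p_\theta\|p_{\theta'})$.
   Context: Each $\theta\in\Theta$ defines a policy of an MDP inducing a trajectory distribution $p_\theta$; the return satisfies $\mathcal R(\tau)\in[0,1]$, $J(\theta)=\mathbb E_{\tau\sim p_\theta}[\mathcal R(\tau)]$, $J^*=\sup_{\theta}J(\theta)$ and $\Delta(\theta)=J^*-J(\theta)$. For probability measures $P\ll Q$, $d_2(P\|Q)=\int(\frac{dP}{dQ})^2dQ$ ($+\infty$ if $P\not\ll Q$). *)

theory Defs
  imports "HOL-Probability.Probability"
begin

text \<open>In Isabelle, "absolutely_continuous Q P" means P << Q, and RN_deriv Q P = dP/dQ.\<close>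
definition d2 :: "'b measure \<Rightarrow> 'b measure \<Rightarrow> ennreal" where
  "d2 P Q = (if sets P = sets Q \<and> absolutely_continuous Q P
             then (\<integral>\<^sup>+ x. (RN_deriv Q P x)\<^sup>2 \<partial>Q) else \<infinity>)"

definition expected_return :: "('a \<Rightarrow> 'b measure) \<Rightarrow> ('b \<Rightarrow> real) \<Rightarrow> 'a \<Rightarrow> real" where
  "expected_return p R \<theta> = (\<integral> \<tau>. R \<tau> \<partial>(p \<theta>))"

definition opt_return :: "'a set \<Rightarrow> ('a \<Rightarrow> 'b measure) \<Rightarrow> ('b \<Rightarrow> real) \<Rightarrow> real" where
  "opt_return \<Theta> p R = (SUP \<theta>\<in>\<Theta>. expected_return p R \<theta>)"

definition opt_gap :: "'a set \<Rightarrow> ('a \<Rightarrow> 'b measure) \<Rightarrow> ('b \<Rightarrow> real) \<Rightarrow> 'a \<Rightarrow> real" where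
  "opt_gap \<Theta> p R \<theta> = opt_return \<Theta> p R - expected_return p R \<theta>"

definition vdiv :: "'a set \<Rightarrow> ('a \<Rightarrow> 'b measure) \<Rightarrow> 'a \<Rightarrow> ennreal" where
  "vdiv \<Theta> p \<theta> = (SUP \<theta>'\<in>\<Theta>. d2 (p \<theta>) (p \<theta>'))"

end

theory Submission
  imports Defs
begin

(* Write L = dP/dQ. For a reward R with values in [0,1], E_Q[R] - E_P[R] = E_Q[(1 - L) R], and
   E_Q[(1 - L)^2] = d_2(P||Q) - 1, so Cauchy-Schwarz bounds the difference by sqrt (d_2 - 1); it is
   also trivially at most 1. Since min 1 (d - 1) <= 2 (1 - 1/d) <= 2 ln d, the difference is at most
   sqrt (2 ln d_2(P||Q)). Taking P = p theta, Q = p theta' and using d_2(p theta||p theta') <= v(theta)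
   for every theta' bounds J* - J(theta). *)

lemma mult_le_AM_GM_bound:
  fixes t u r :: real
  assumes "t > 0" and "\<bar>r\<bar> \<le> 1"
  shows "u * r \<le> (t * u\<^sup>2 + 1 / t) / 2"
proof -
  have "2 * t * (u * r) \<le> t\<^sup>2 * u\<^sup>2 + r\<^sup>2"
    using sum_squares_bound[of "t * u" r] by (simp add: power_mult_distrib algebra_simps)
  also have "r\<^sup>2 \<le> 1"
    using assms(2) by (simp add: abs_square_le_1)
  finally show ?thesis
    using assms(1) by (simp add: field_simps power2_eq_square)
qed

lemma le_sqrt_of_AM_GM_bounds:
  fixes a A :: real
  assumes "0 \<le> A" and bound: "\<And>t. t > 0 \<Longrightarrow> a \<le> (t * A + 1 / t) / 2"
  shows "a \<le> sqrt A"
proof (cases "a \<le> 0")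
  case False
  show ?thesis
  proof (cases "A = 0")
    case True
    then show ?thesis using bound[of "1 / a"] False by simp
  next
    case False
    then have "A > 0" using assms(1) by simp
    then show ?thesis using bound[of "1 / sqrt A"] by (simp add: real_div_sqrt)
  qed
qed (use assms(1) in \<open>auto intro: order_trans[OF _ real_sqrt_ge_zero]\<close>)

lemma min_one_le_two_ln:
  fixes d :: real
  assumes "1 \<le> d"
  shows "min 1 (d - 1) \<le> 2 * ln d"
proof -
  have "1 - 1 / d \<le> ln d"
    using ln_le_minus_one[of "1 / d"] assms by (simp add: ln_div)
  moreover have "min 1 (d - 1) \<le> 2 * (1 - 1 / d)"
  proof (cases "d \<le> 2")
    case True
    have "(d - 1) * (d - 2) \<le> 0"
      using True assms by (intro mult_nonneg_nonpos) auto
    then show ?thesis using True assms by (simp add: min_def field_simps algebra_simps)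
  qed (use assms in \<open>auto simp: field_simps\<close>)
  ultimately show ?thesis by simp
qed

lemma le_sqrt_two_ln:
  fixes a d :: real
  assumes "1 \<le> d" and "a \<le> 1" and "a \<le> sqrt (d - 1)"
  shows "a \<le> sqrt (2 * ln d)"
proof (cases "a \<le> 0")
  case False
  have "a\<^sup>2 \<le> (sqrt (d - 1))\<^sup>2"
    using False assms(3) by (intro power_mono) auto
  then have "a\<^sup>2 \<le> min 1 (d - 1)"
    using False assms by (simp add: power_le_one)
  also have "\<dots> \<le> 2 * ln d"
    using assms(1) by (rule min_one_le_two_ln)
  finally show ?thesis by (rule real_le_rsqrt)
qed (use assms(1) in \<open>auto intro!: order_trans[OF _ real_sqrt_ge_zero]\<close>)

(* Cauchy-Schwarz against a weight bounded by 1, proved by integrating the pointwise AM-GM bound. *)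
lemma (in prob_space) integral_mult_le_sqrt_integral_sq:
  fixes f g :: "'a \<Rightarrow> real"
  assumes fg: "integrable M (\<lambda>x. f x * g x)" and f2: "integrable M (\<lambda>x. (f x)\<^sup>2)"
    and g: "\<And>x. x \<in> space M \<Longrightarrow> \<bar>g x\<bar> \<le> 1"
  shows "(\<integral>x. f x * g x \<partial>M) \<le> sqrt (\<integral>x. (f x)\<^sup>2 \<partial>M)"
proof (rule le_sqrt_of_AM_GM_bounds)
  show "0 \<le> (\<integral>x. (f x)\<^sup>2 \<partial>M)" by simp
next
  fix t :: real
  assume "t > 0"
  then have "(\<integral>x. f x * g x \<partial>M) \<le> (\<integral>x. (t * (f x)\<^sup>2 + 1 / t) / 2 \<partial>M)"
    using fg f2 g by (intro integral_mono mult_le_AM_GM_bound) auto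
  also have "\<dots> = (t * (\<integral>x. (f x)\<^sup>2 \<partial>M) + 1 / t) / 2"
    using f2 by (simp add: prob_space)
  finally show "(\<integral>x. f x * g x \<partial>M) \<le> (t * (\<integral>x. (f x)\<^sup>2 \<partial>M) + 1 / t) / 2" .
qed

lemma (in sigma_finite_measure) integral_diff_eq_integral_one_minus_RN_deriv:
  assumes N: "sigma_finite_measure N" and ac: "absolutely_continuous M N" "sets N = sets M"
    and f: "integrable M f" "integrable N f"
  shows "integrable M (\<lambda>x. (1 - enn2real (RN_deriv M N x)) * f x)"
    and "(\<integral>x. f x \<partial>M) - (\<integral>x. f x \<partial>N) = (\<integral>x. (1 - enn2real (RN_deriv M N x)) * f x \<partial>M)"
proof -
  have "integrable M (\<lambda>x. enn2real (RN_deriv M N x) * f x)"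
    using RN_deriv_integrable[OF N ac] f by simp
  then show "integrable M (\<lambda>x. (1 - enn2real (RN_deriv M N x)) * f x)"
    and "(\<integral>x. f x \<partial>M) - (\<integral>x. f x \<partial>N) = (\<integral>x. (1 - enn2real (RN_deriv M N x)) * f x \<partial>M)"
    using f RN_deriv_integral[OF N ac] by (simp_all add: left_diff_distrib)
qed

lemma integral_sq_one_minus_RN_deriv:
  assumes "prob_space P" and "prob_space Q" and fin: "d2 P Q \<noteq> \<infinity>"
  shows "integrable Q (\<lambda>x. (1 - enn2real (RN_deriv Q P x))\<^sup>2)"
    and "(\<integral>x. (1 - enn2real (RN_deriv Q P x))\<^sup>2 \<partial>Q) = enn2real (d2 P Q) - 1"
proof -
  interpret P: prob_space P by fact
  interpret Q: prob_space Q by fact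
  have ac: "absolutely_continuous Q P" "sets P = sets Q"
    and d2_eq: "d2 P Q = (\<integral>\<^sup>+x. (RN_deriv Q P x)\<^sup>2 \<partial>Q)"
    using fin by (auto simp: d2_def split: if_splits)
  define L where "L = (\<lambda>x. enn2real (RN_deriv Q P x))"
  have L_int: "integrable Q L" and L_integral: "(\<integral>x. L x \<partial>Q) = 1"
    using Q.RN_deriv_integrable[OF P.sigma_finite_measure_axioms ac, of "\<lambda>_. 1"]
      Q.RN_deriv_integral[OF P.sigma_finite_measure_axioms ac, of "\<lambda>_. 1"]
    by (simp_all add: L_def P.prob_space)
  have "AE x in Q. ennreal ((L x)\<^sup>2) = (RN_deriv Q P x)\<^sup>2"
    using Q.RN_deriv_finite[OF P.sigma_finite_measure_axioms ac]
    by eventually_elim (simp add: L_def ennreal_power[symmetric] ennreal_enn2real_if)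
  then have "(\<integral>\<^sup>+x. ennreal ((L x)\<^sup>2) \<partial>Q) = d2 P Q"
    unfolding d2_eq by (rule nn_integral_cong_AE)
  also have "\<dots> = ennreal (enn2real (d2 P Q))"
    using fin by (simp add: less_top)
  finally have L2_int: "integrable Q (\<lambda>x. (L x)\<^sup>2)"
    and L2_integral: "(\<integral>x. (L x)\<^sup>2 \<partial>Q) = enn2real (d2 P Q)"
    by (auto intro: integrableI_nn_integral_finite simp: L_def integral_eq_nn_integral)
  have sq: "(1 - L x)\<^sup>2 = 1 - 2 * L x + (L x)\<^sup>2" for x
    by (simp add: power2_eq_square algebra_simps)
  show "integrable Q (\<lambda>x. (1 - enn2real (RN_deriv Q P x))\<^sup>2)"
    using L_int L2_int unfolding sq L_def[symmetric, THEN fun_cong] by simp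
  show "(\<integral>x. (1 - enn2real (RN_deriv Q P x))\<^sup>2 \<partial>Q) = enn2real (d2 P Q) - 1"
    using L_int L2_int L_integral L2_integral unfolding sq L_def[symmetric, THEN fun_cong]
    by (simp add: Q.prob_space)
qed

lemma one_le_enn2real_d2:
  assumes "prob_space P" and "prob_space Q" and "d2 P Q \<noteq> \<infinity>"
  shows "1 \<le> enn2real (d2 P Q)"
  using integral_nonneg_AE[where M = Q and f = "\<lambda>x. (1 - enn2real (RN_deriv Q P x))\<^sup>2"]
    integral_sq_one_minus_RN_deriv(2)[OF assms]
  by simp

lemma integral_diff_le_sqrt_two_ln_d2:
  assumes P: "prob_space P" and Q: "prob_space Q" and fin: "d2 P Q \<noteq> \<infinity>"
    and R_meas: "R \<in> borel_measurable Q"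
    and R_range: "\<And>x. x \<in> space Q \<Longrightarrow> 0 \<le> R x \<and> R x \<le> 1"
  shows "(\<integral>x. R x \<partial>Q) - (\<integral>x. R x \<partial>P) \<le> sqrt (2 * ln (enn2real (d2 P Q)))"
proof -
  interpret P: prob_space P by fact
  interpret Q: prob_space Q by fact
  have ac: "absolutely_continuous Q P" "sets P = sets Q"
    using fin by (auto simp: d2_def split: if_splits)
  have space_P: "space P = space Q"
    using ac(2) by (rule sets_eq_imp_space_eq)
  have R_int_Q: "integrable Q R"
    using R_meas R_range by (intro Q.integrable_const_bound[where B = 1]) auto
  have R_int_P: "integrable P R"
    using R_meas R_range measurable_cong_sets[OF ac(2) refl, of borel] space_P
    by (intro P.integrable_const_bound[where B = 1]) auto
  define L where "L = (\<lambda>x. enn2real (RN_deriv Q P x))"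
  note diff = Q.integral_diff_eq_integral_one_minus_RN_deriv
    [OF P.sigma_finite_measure_axioms ac R_int_Q R_int_P, folded L_def]
  have "(\<integral>x. R x \<partial>Q) \<le> 1"
    using R_int_Q R_range integral_mono[of Q R "\<lambda>_. 1"] by (simp add: Q.prob_space)
  moreover have "0 \<le> (\<integral>x. R x \<partial>P)"
    using R_range space_P by (intro integral_nonneg_AE AE_I2) auto
  moreover have "(\<integral>x. (1 - L x) * R x \<partial>Q) \<le> sqrt (\<integral>x. (1 - L x)\<^sup>2 \<partial>Q)"
    using diff(1) integral_sq_one_minus_RN_deriv(1)[OF P Q fin] R_range
    by (intro Q.integral_mult_le_sqrt_integral_sq) (auto simp: L_def)
  ultimately show ?thesis
    using diff(2) integral_sq_one_minus_RN_deriv(2)[OF P Q fin] one_le_enn2real_d2[OF P Q fin]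
    by (intro le_sqrt_two_ln) (auto simp: L_def)
qed

theorem lemma5:
  fixes \<Theta> :: "'a set" and p :: "'a \<Rightarrow> 'b measure" and S :: "'b measure"
    and R :: "'b \<Rightarrow> real" and \<theta> :: 'a
  assumes prob: "\<And>\<theta>'. \<theta>' \<in> \<Theta> \<Longrightarrow> prob_space (p \<theta>')"
    and sets_eq: "\<And>\<theta>'. \<theta>' \<in> \<Theta> \<Longrightarrow> sets (p \<theta>') = sets S"
    and R_meas: "R \<in> borel_measurable S"
    and R_range: "\<And>\<tau>. \<tau> \<in> space S \<Longrightarrow> 0 \<le> R \<tau> \<and> R \<tau> \<le> 1"
    and \<theta>_in: "\<theta> \<in> \<Theta>"
  shows "vdiv \<Theta> p \<theta> = \<infinity> \<or>
         opt_gap \<Theta> p R \<theta> \<le> sqrt (2 * ln (enn2real (vdiv \<Theta> p \<theta>)))"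
proof (cases "vdiv \<Theta> p \<theta> = \<infinity>")
  case False
  let ?bound = "sqrt (2 * ln (enn2real (vdiv \<Theta> p \<theta>)))"
  have "expected_return p R \<theta>' \<le> expected_return p R \<theta> + ?bound" if \<theta>': "\<theta>' \<in> \<Theta>" for \<theta>'
  proof -
    have d2_le: "d2 (p \<theta>) (p \<theta>') \<le> vdiv \<Theta> p \<theta>"
      unfolding vdiv_def using \<theta>' by (rule SUP_upper)
    with False have fin: "d2 (p \<theta>) (p \<theta>') \<noteq> \<infinity>"
      by (auto simp: top_unique)
    have "(\<integral>x. R x \<partial>p \<theta>') - (\<integral>x. R x \<partial>p \<theta>) \<le> sqrt (2 * ln (enn2real (d2 (p \<theta>) (p \<theta>'))))"
      using R_meas R_range sets_eq_imp_space_eq[OF sets_eq[OF \<theta>']]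
        measurable_cong_sets[OF sets_eq[OF \<theta>'] refl]
      by (intro integral_diff_le_sqrt_two_ln_d2 prob \<theta>' \<theta>_in fin) auto
    also have "\<dots> \<le> ?bound"
    proof -
      have "enn2real (d2 (p \<theta>) (p \<theta>')) \<le> enn2real (vdiv \<Theta> p \<theta>)"
        using d2_le False by (simp add: enn2real_mono top.not_eq_extremum)
      then show ?thesis
        using one_le_enn2real_d2[OF prob[OF \<theta>_in] prob[OF \<theta>'] fin] by simp
    qed
    finally show ?thesis
      by (simp add: expected_return_def)
  qed
  then have "opt_return \<Theta> p R \<le> expected_return p R \<theta> + ?bound"
    unfolding opt_return_def using \<theta>_in by (blast intro: cSUP_least)
  then show ?thesis
    unfolding opt_gap_def by simp
qed simp

end
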